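(* There exists an atomic Puiseux monoid $M$ such that (1) $M \subseteq \mathbb{Z}\big[\tfrac{1}{2}, \tfrac{1}{3}\big]$, and (2) $\tfrac{1}{2^n} \in M$ for every $n \in \mathbb{N}_0$.
   Context: A Puiseux monoid is a submonoid of $(\mathbb{Q}_{\ge 0}, +)$. An atom of a monoid $M$ is a nonzero element $a$ (in a Puiseux monoid the only invertible element is $0$) such that $a = x+y$ with $x,y\in M$ implies $x = 0$ or $y = 0$; $M$ is atomic if every nonzero element is a finite sum of atoms. $\mathbb{N}_0 = \{0,1,2,\dots\}$. *)

theory Defs
  imports Complex_Main "HOL-Library.Multiset"
begin

definition puiseux_monoid :: "rat set \<Rightarrow> bool" where
  "puiseux_monoid M \<longleftrightarrow> (\<forall>x\<in>M. 0 \<le> x) \<and> 0 \<in> M \<and> (\<forall>x\<in>M. \<forall>y\<in>M. x + y \<in> M)"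

text \<open>Atoms of a Puiseux monoid (the only unit is 0).\<close>
definition atom_of :: "rat set \<Rightarrow> rat \<Rightarrow> bool" where
  "atom_of M a \<longleftrightarrow> a \<in> M \<and> a \<noteq> 0 \<and>
     (\<forall>x\<in>M. \<forall>y\<in>M. a = x + y \<longrightarrow> x = 0 \<or> y = 0)"

definition atomic_monoid :: "rat set \<Rightarrow> bool" where
  "atomic_monoid M \<longleftrightarrow> (\<forall>x\<in>M. x \<noteq> 0 \<longrightarrow>
     (\<exists>A :: rat multiset. A \<noteq> {#} \<and> (\<forall>a\<in>#A. atom_of M a) \<and> sum_mset A = x))"

definition Z_half_third :: "rat set" where
  "Z_half_third = {of_int k / (2 ^ m * 3 ^ n) | k m n. True}"

end

theory Submission
  imports Defs
begin

(* M is generated by a_n = 1/3^n - 1/(2*4^n) and b_n = 1/2^n - 1/3^n + 1/(2*4^n) for n >= 1.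
   Since a_n + b_n = 1/2^n, M contains every 1/2^n, and clearly M lies in Z[1/2, 1/3].
   M is atomic because each generator has only the trivial representation as a sum of
   generators. In any such representation the summands with 3-power denominators and those
   with 2-power denominators balance separately: their defect lies in Z[1/3] and in Z[1/2],
   hence in Z, and it has absolute value < 1. If the generator itself does not occur, then
   every occurring generator of the same kind is smaller and thus has larger index; a
   suitable linear combination of the two kinds of summands is then nonnegative on all
   occurring generators but negative on the represented one, which is impossible. *)

lemma sum_mset_add_distrib:
  "(\<Sum>i\<in>#I. f i + g i) = (\<Sum>i\<in>#I. f i) + (\<Sum>i\<in>#I. g i)"
  by (induction I) (simp_all add: algebra_simps)

lemma sum_mset_nonneg:
  fixes f :: "'a \<Rightarrow> 'b::ordered_comm_monoid_add"
  assumes "\<And>i. i \<in># I \<Longrightarrow> 0 \<le> f i"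
  shows "0 \<le> (\<Sum>i\<in>#I. f i)"
  using sum_mset_mono[of I "\<lambda>_. 0" f] assms by simp

lemma member_le_sum_mset:
  fixes f :: "'a \<Rightarrow> 'b::ordered_comm_monoid_add"
  assumes "\<And>i. i \<in># I \<Longrightarrow> 0 \<le> f i" and "j \<in># I"
  shows "f j \<le> (\<Sum>i\<in>#I. f i)"
proof -
  obtain J where I: "I = add_mset j J" using multi_member_split[OF assms(2)] by blast
  have "0 \<le> (\<Sum>i\<in>#J. f i)" using assms(1) by (intro sum_mset_nonneg) (simp add: I)
  then show ?thesis unfolding I by (simp add: add_increasing2)
qed

lemma sum_mset_eq_member_imp_singleton:
  fixes f :: "'a \<Rightarrow> 'b::ordered_cancel_comm_monoid_add"
  assumes pos: "\<And>i. i \<in># I \<Longrightarrow> 0 < f i" and "j \<in># I" and "(\<Sum>i\<in>#I. f i) = f j"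
  shows "I = {#j#}"
proof -
  obtain J where I: "I = add_mset j J" using multi_member_split[OF assms(2)] by blast
  have "(\<Sum>i\<in>#J. f i) = 0"
    using assms(3) unfolding I by simp (metis add.right_neutral add_left_cancel)
  have "J = {#}"
  proof (rule ccontr)
    assume "J \<noteq> {#}"
    then obtain i where "i \<in># J" by blast
    then have "f i \<le> (\<Sum>i\<in>#J. f i)"
      using pos by (intro member_le_sum_mset) (auto simp: I less_imp_le)
    then show False using pos[of i] \<open>i \<in># J\<close> \<open>(\<Sum>i\<in>#J. f i) = 0\<close> by (simp add: I)
  qed
  then show ?thesis using I by simp
qed

lemma abs_sum_mset_le: "\<bar>\<Sum>i\<in>#I. f i\<bar> \<le> (\<Sum>i\<in>#I. \<bar>f i\<bar>)"
  for f :: "'a \<Rightarrow> 'b::ordered_ab_group_add_abs"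
  by (induction I) (auto intro: order_trans[OF abs_triangle_ineq] add_left_mono)

lemma sum_mset_closed:
  assumes "0 \<in> S" and "\<And>x y. x \<in> S \<Longrightarrow> y \<in> S \<Longrightarrow> x + y \<in> S"
    and "\<And>i. i \<in># I \<Longrightarrow> f i \<in> S"
  shows "(\<Sum>i\<in>#I. f i) \<in> S"
  using assms(3) by (induction I) (simp_all add: assms(1,2))

definition generated_monoid :: "('i \<Rightarrow> rat) \<Rightarrow> rat set" where
  "generated_monoid g = range (\<lambda>I. \<Sum>i\<in>#I. g i)"

lemma generated_monoid_subset:
  assumes "0 \<in> S" and "\<And>x y. x \<in> S \<Longrightarrow> y \<in> S \<Longrightarrow> x + y \<in> S" and "\<And>i. g i \<in> S"
  shows "generated_monoid g \<subseteq> S"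
  unfolding generated_monoid_def by (auto intro!: sum_mset_closed[OF assms(1,2)] assms(3))

lemma puiseux_monoid_generated_monoid:
  assumes "\<And>i. 0 \<le> g i"
  shows "puiseux_monoid (generated_monoid g)"
  unfolding puiseux_monoid_def generated_monoid_def
proof (intro conjI ballI)
  show "0 \<in> range (\<lambda>I. \<Sum>i\<in>#I. g i)"
    by (rule range_eqI[of _ _ "{#}"]) simp
  fix x assume "x \<in> range (\<lambda>I. \<Sum>i\<in>#I. g i)"
  then obtain I where "x = (\<Sum>i\<in>#I. g i)" by blast
  then show "0 \<le> x" using assms by (simp add: sum_mset_nonneg)
next
  fix x y assume "x \<in> range (\<lambda>I. \<Sum>i\<in>#I. g i)" "y \<in> range (\<lambda>I. \<Sum>i\<in>#I. g i)"
  then obtain I J where "x = (\<Sum>i\<in>#I. g i)" "y = (\<Sum>i\<in>#J. g i)" by blast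
  then have "x + y = (\<Sum>i\<in>#I + J. g i)" by simp
  then show "x + y \<in> range (\<lambda>I. \<Sum>i\<in>#I. g i)" by blast
qed

lemma atom_of_generated_monoid:
  assumes unique: "\<And>I. (\<Sum>i\<in>#I. g i) = g j \<Longrightarrow> I = {#j#}"
  shows "atom_of (generated_monoid g) (g j)"
  unfolding atom_of_def generated_monoid_def
proof (intro conjI ballI impI)
  show "g j \<in> range (\<lambda>I. \<Sum>i\<in>#I. g i)"
    by (rule range_eqI[of _ _ "{#j#}"]) simp
  show "g j \<noteq> 0" using unique[of "{#}"] by auto
  fix x y assume "x \<in> range (\<lambda>I. \<Sum>i\<in>#I. g i)" "y \<in> range (\<lambda>I. \<Sum>i\<in>#I. g i)"
    and "g j = x + y"
  then obtain I J where x: "x = (\<Sum>i\<in>#I. g i)" and y: "y = (\<Sum>i\<in>#J. g i)" by blast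
  with \<open>g j = x + y\<close> have "I + J = {#j#}" by (intro unique) simp
  then have "I = {#} \<or> J = {#}" by (auto simp: union_is_single)
  then show "x = 0 \<or> y = 0" using x y by auto
qed

lemma atomic_generated_monoid:
  assumes "\<And>j. atom_of (generated_monoid g) (g j)"
  shows "atomic_monoid (generated_monoid g)"
  unfolding atomic_monoid_def
proof (intro ballI impI)
  fix x assume "x \<in> generated_monoid g" "x \<noteq> 0"
  then obtain I where x: "x = (\<Sum>i\<in>#I. g i)" unfolding generated_monoid_def by blast
  show "\<exists>A. A \<noteq> {#} \<and> (\<forall>a\<in>#A. atom_of (generated_monoid g) a) \<and> sum_mset A = x"
    using x \<open>x \<noteq> 0\<close> assms by (intro exI[of _ "image_mset g I"]) auto
qed

(* An opaque name for 1 / c ^ n, so that simp leaves these powers alone and linarith can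
   treat them as atoms. *)
definition inv_pow :: "rat \<Rightarrow> nat \<Rightarrow> rat" where
  "inv_pow c n = 1 / c ^ n"

lemma inv_pow_Suc: "inv_pow c (Suc n) = inv_pow c n / c"
  by (simp add: inv_pow_def)

lemma power_mult_inv_pow: "c \<noteq> 0 \<Longrightarrow> (c / d) ^ n * inv_pow c n = inv_pow d n"
  by (simp add: inv_pow_def power_divide)

definition Z_inv :: "int \<Rightarrow> rat set" where
  "Z_inv p = {r. \<exists>e. of_int p ^ e * r \<in> \<int>}"

lemma Ints_of_int_power_mult: "x \<in> \<int> \<Longrightarrow> of_int p ^ e * x \<in> \<int>"
  by (intro Ints_mult Ints_power Ints_of_int)

lemma zero_in_Z_inv: "0 \<in> Z_inv p"
  unfolding Z_inv_def by auto

lemma Z_inv_add: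
  assumes "x \<in> Z_inv p" "y \<in> Z_inv p"
  shows "x + y \<in> Z_inv p"
proof -
  obtain e1 e2 where "of_int p ^ e1 * x \<in> \<int>" "of_int p ^ e2 * y \<in> \<int>"
    using assms unfolding Z_inv_def by blast
  then have "of_int p ^ e2 * (of_int p ^ e1 * x) + of_int p ^ e1 * (of_int p ^ e2 * y) \<in> \<int>"
    by (intro Ints_add Ints_of_int_power_mult[of "of_int p ^ e1 * x"]
        Ints_of_int_power_mult[of "of_int p ^ e2 * y"])
  then have "of_int p ^ (e1 + e2) * (x + y) \<in> \<int>" by (simp add: power_add algebra_simps)
  then show ?thesis unfolding Z_inv_def by blast
qed

lemma Z_inv_uminus: "x \<in> Z_inv p \<Longrightarrow> - x \<in> Z_inv p"
  unfolding Z_inv_def using Ints_minus by fastforce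

lemma Z_inv_diff: "x \<in> Z_inv p \<Longrightarrow> y \<in> Z_inv p \<Longrightarrow> x - y \<in> Z_inv p"
  using Z_inv_add[of x p "- y"] Z_inv_uminus[of y p] by simp

lemma Z_inv_mult:
  assumes "x \<in> Z_inv p" "y \<in> Z_inv p"
  shows "x * y \<in> Z_inv p"
proof -
  obtain e1 e2 where "of_int p ^ e1 * x \<in> \<int>" "of_int p ^ e2 * y \<in> \<int>"
    using assms unfolding Z_inv_def by blast
  then have "(of_int p ^ e1 * x) * (of_int p ^ e2 * y) \<in> \<int>" by (rule Ints_mult)
  then have "of_int p ^ (e1 + e2) * (x * y) \<in> \<int>" by (simp add: power_add algebra_simps)
  then show ?thesis unfolding Z_inv_def by blast
qed

lemma inv_pow_in_Z_inv:
  assumes "d dvd p ^ m"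
  shows "inv_pow (of_int d) k \<in> Z_inv p"
proof (cases "d = 0 \<and> k \<noteq> 0")
  case True
  then show ?thesis using zero_in_Z_inv by (simp add: inv_pow_def zero_power)
next
  case False
  obtain c where "p ^ m = d * c" using assms by blast
  then have "of_int p ^ (m * k) * inv_pow (of_int d) k = (of_int c ^ k :: rat)"
    using False by (auto simp: inv_pow_def power_mult power_mult_distrib simp flip: of_int_power)
  then show ?thesis unfolding Z_inv_def by (metis (mono_tags) Ints_of_int Ints_power mem_Collect_eq)
qed

lemma Z_inv_divide:
  assumes "x \<in> Z_inv p" and "d dvd p ^ m"
  shows "x / of_int d \<in> Z_inv p"
  using Z_inv_mult[OF assms(1) inv_pow_in_Z_inv[OF assms(2), of 1]] by (simp add: inv_pow_def)

lemma Z_inv_mono: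
  assumes "d dvd p"
  shows "Z_inv d \<subseteq> Z_inv p"
proof
  fix r assume "r \<in> Z_inv d"
  then obtain e where e: "of_int d ^ e * r \<in> \<int>" unfolding Z_inv_def by blast
  obtain c where "p = d * c" using assms by blast
  then have "of_int p ^ e * r = of_int c ^ e * (of_int d ^ e * r)"
    by (simp add: power_mult_distrib)
  also have "\<dots> \<in> \<int>" using e by (rule Ints_of_int_power_mult)
  finally have "of_int p ^ e * r \<in> \<int>" .
  then show "r \<in> Z_inv p" unfolding Z_inv_def by blast
qed

lemma Ints_if_Z_inv_coprime:
  assumes "coprime p q" and "r \<in> Z_inv p" and "r \<in> Z_inv q"
  shows "r \<in> \<int>"
proof -
  obtain a b where a: "of_int p ^ a * r \<in> \<int>" and b: "of_int q ^ b * r \<in> \<int>"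
    using assms(2,3) unfolding Z_inv_def by blast
  have "coprime (p ^ a) (q ^ b)" using assms(1) by simp
  then obtain u v where uv: "u * p ^ a + v * q ^ b = 1"
    using bezout_int[of "p ^ a" "q ^ b"] by (auto simp: coprime_iff_gcd_eq_1)
  have "r = of_int (u * p ^ a + v * q ^ b) * r" using uv by simp
  also have "\<dots> = of_int u * (of_int p ^ a * r) + of_int v * (of_int q ^ b * r)"
    by (simp add: algebra_simps)
  also have "\<dots> \<in> \<int>" using a b by (intro Ints_add Ints_mult[OF Ints_of_int])
  finally show ?thesis .
qed

lemma Z_inv_6_subset: "Z_inv 6 \<subseteq> Z_half_third"
proof
  fix r assume "r \<in> Z_inv 6"
  then obtain e c where "6 ^ e * r = of_int c" unfolding Z_inv_def by (auto elim: Ints_cases)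
  then have "r = of_int c / (2 ^ e * 3 ^ e)" by (simp add: field_simps flip: power_mult_distrib)
  then show "r \<in> Z_half_third" unfolding Z_half_third_def by blast
qed

(* A n and B n stand for a_(n+1) and b_(n+1): at exponent 0 both values would be 1/2,
   which is not an atom. *)
datatype generator = A nat | B nat

fun part3 :: "generator \<Rightarrow> rat" where
  "part3 (A k) = inv_pow 3 (Suc k)"
| "part3 (B k) = - inv_pow 3 (Suc k)"

fun part2 :: "generator \<Rightarrow> rat" where
  "part2 (A k) = - inv_pow 4 (Suc k) / 2"
| "part2 (B k) = inv_pow 2 (Suc k) + inv_pow 4 (Suc k) / 2"

fun level :: "generator \<Rightarrow> nat" where
  "level (A k) = k"
| "level (B k) = k"

definition gen_val :: "generator \<Rightarrow> rat" where
  "gen_val i = part3 i + part2 i"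

lemma inv_pow_bounds:
  shows "0 < inv_pow 4 (Suc k)"
    and "inv_pow 4 (Suc k) < inv_pow 3 (Suc k)"
    and "3 * inv_pow 3 (Suc k) \<le> 2 * inv_pow 2 (Suc k)"
    and "inv_pow 3 (Suc k) \<le> 1 / 3"
    and "inv_pow 2 (Suc k) \<le> 1 / 2"
proof -
  show "0 < inv_pow 4 (Suc k)" by (simp add: inv_pow_def)
  show "inv_pow 4 (Suc k) < inv_pow 3 (Suc k)"
    unfolding inv_pow_def by (intro divide_strict_left_mono power_strict_mono) auto
  have "(1::rat) / 3 ^ k \<le> 1 / 2 ^ k"
    by (intro divide_left_mono power_mono) auto
  then show "3 * inv_pow 3 (Suc k) \<le> 2 * inv_pow 2 (Suc k)" by (simp add: inv_pow_def)
  show "inv_pow 3 (Suc k) \<le> 1 / 3" "inv_pow 2 (Suc k) \<le> 1 / 2"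
    by (simp_all add: inv_pow_def field_simps)
qed

lemma gen_val_pos: "0 < gen_val i"
  using inv_pow_bounds[of "level i"] by (cases i) (simp_all add: gen_val_def)

lemma abs_part3_le: "\<bar>part3 i\<bar> \<le> 2 * gen_val i"
  using inv_pow_bounds[of "level i"] by (cases i) (simp_all add: gen_val_def)

lemma gen_val_part3_small: "2 * gen_val i + \<bar>part3 i\<bar> < 1"
  using inv_pow_bounds[of "level i"] by (cases i) (simp_all add: gen_val_def)

lemma gen_val_A_strict_antimono: "k < l \<Longrightarrow> gen_val (A l) < gen_val (A k)"
proof -
  have "gen_val (A (Suc m)) < gen_val (A m)" for m
    using inv_pow_bounds[of m] by (simp add: gen_val_def inv_pow_Suc[of _ "Suc m"])
  then show "k < l \<Longrightarrow> gen_val (A l) < gen_val (A k)"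
    using lift_Suc_mono_less[of "\<lambda>m. - gen_val (A m)"] by simp
qed

lemma gen_val_B_strict_antimono: "k < l \<Longrightarrow> gen_val (B l) < gen_val (B k)"
proof -
  have "gen_val (B (Suc m)) < gen_val (B m)" for m
    using inv_pow_bounds[of m] by (simp add: gen_val_def inv_pow_Suc[of _ "Suc m"])
  then show "k < l \<Longrightarrow> gen_val (B l) < gen_val (B k)"
    using lift_Suc_mono_less[of "\<lambda>m. - gen_val (B m)"] by simp
qed

lemma part3_in_Z_inv: "part3 i \<in> Z_inv 3"
  using inv_pow_in_Z_inv[of 3 3 1] by (cases i) (simp_all add: Z_inv_uminus)

lemma part2_in_Z_inv: "part2 i \<in> Z_inv 2"
proof -
  have "inv_pow 2 n \<in> Z_inv 2" "inv_pow 4 n \<in> Z_inv 2" for n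
    using inv_pow_in_Z_inv[of 2 2 1] inv_pow_in_Z_inv[of 4 2 2] by simp_all
  moreover have "x / 2 \<in> Z_inv 2" if "x \<in> Z_inv 2" for x
    using Z_inv_divide[OF that, of 2 1] by simp
  ultimately show ?thesis by (cases i) (simp_all add: Z_inv_add Z_inv_uminus)
qed

lemma gen_val_in_Z_inv_6: "gen_val i \<in> Z_inv 6"
proof -
  have "part3 i \<in> Z_inv 6" using part3_in_Z_inv Z_inv_mono[of 3 6] by auto
  moreover have "part2 i \<in> Z_inv 6" using part2_in_Z_inv Z_inv_mono[of 2 6] by auto
  ultimately show ?thesis unfolding gen_val_def by (rule Z_inv_add)
qed

lemma sum_parts_eq:
  assumes sum: "(\<Sum>i\<in>#I. gen_val i) = gen_val j"
  shows "(\<Sum>i\<in>#I. part3 i) = part3 j" and "(\<Sum>i\<in>#I. part2 i) = part2 j"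
proof -
  define N where "N = (\<Sum>i\<in>#I. part3 i) - part3 j"
  have parts: "(\<Sum>i\<in>#I. part3 i) + (\<Sum>i\<in>#I. part2 i) = part3 j + part2 j"
    using sum by (simp add: gen_val_def sum_mset_add_distrib)
  have "(\<Sum>i\<in>#I. part3 i) \<in> Z_inv 3"
    by (rule sum_mset_closed) (simp_all add: zero_in_Z_inv Z_inv_add part3_in_Z_inv)
  then have "N \<in> Z_inv 3" unfolding N_def by (intro Z_inv_diff part3_in_Z_inv)
  have "(\<Sum>i\<in>#I. part2 i) \<in> Z_inv 2"
    by (rule sum_mset_closed) (simp_all add: zero_in_Z_inv Z_inv_add part2_in_Z_inv)
  then have "part2 j - (\<Sum>i\<in>#I. part2 i) \<in> Z_inv 2" by (intro Z_inv_diff part2_in_Z_inv)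
  moreover have "N = part2 j - (\<Sum>i\<in>#I. part2 i)" unfolding N_def using parts by linarith
  ultimately have "N \<in> Z_inv 2" by simp
  have "coprime (3::int) 2" by simp
  then have "N \<in> \<int>" using \<open>N \<in> Z_inv 3\<close> \<open>N \<in> Z_inv 2\<close> by (rule Ints_if_Z_inv_coprime)
  have "\<bar>\<Sum>i\<in>#I. part3 i\<bar> \<le> (\<Sum>i\<in>#I. \<bar>part3 i\<bar>)" by (rule abs_sum_mset_le)
  also have "\<dots> \<le> (\<Sum>i\<in>#I. 2 * gen_val i)" by (rule sum_mset_mono) (rule abs_part3_le)
  also have "\<dots> = 2 * gen_val j" using sum by (simp flip: sum_mset_distrib_left)
  finally have "\<bar>N\<bar> < 1" unfolding N_def using gen_val_part3_small[of j] by linarith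
  with \<open>N \<in> \<int>\<close> have "N = 0" by (rule Ints_nonzero_abs_less1)
  then show "(\<Sum>i\<in>#I. part3 i) = part3 j" and "(\<Sum>i\<in>#I. part2 i) = part2 j"
    unfolding N_def using parts by linarith+
qed

(* For k > n the coefficient dominates the ratio (3/4)^(k+1)/2 of the two parts of A k,
   for k = n it does not. *)
lemma A_functional_nonneg:
  assumes "\<And>k. i = A k \<Longrightarrow> n < k"
  shows "0 \<le> part2 i + (3/4) ^ Suc (Suc n) / 2 * part3 i"
proof (cases i)
  case (A k)
  with assms have "Suc (Suc n) \<le> Suc k" by simp
  then have "(3/4) ^ Suc k \<le> (3/4 :: rat) ^ Suc (Suc n)" by (rule power_decreasing) auto
  then have "(3/4) ^ Suc k * inv_pow 3 (Suc k) \<le> (3/4) ^ Suc (Suc n) * inv_pow 3 (Suc k)"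
    by (rule mult_right_mono) (simp add: inv_pow_def)
  moreover have "(3/4) ^ Suc k * inv_pow 3 (Suc k) = inv_pow 4 (Suc k)"
    by (rule power_mult_inv_pow) simp
  moreover have "(3/4) ^ Suc (Suc n) / 2 * inv_pow 3 (Suc k)
      = (3/4) ^ Suc (Suc n) * inv_pow 3 (Suc k) / 2" by simp
  ultimately show ?thesis unfolding A part2.simps part3.simps by linarith
next
  case (B k)
  have "(3/4 :: rat) ^ Suc (Suc n) \<le> 1" by (rule power_le_one) auto
  then have "(3/4) ^ Suc (Suc n) / 2 * inv_pow 3 (Suc k) \<le> inv_pow 3 (Suc k)"
    by (intro mult_left_le_one_le) (simp_all add: inv_pow_def)
  then show ?thesis
    using inv_pow_bounds[of k] unfolding B part2.simps part3.simps mult_minus_right by linarith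
qed

lemma A_functional_neg: "part2 (A n) + (3/4) ^ Suc (Suc n) / 2 * part3 (A n) < 0"
proof -
  have "(3/4) ^ Suc (Suc n) / 2 * inv_pow 3 (Suc n) = 3/8 * ((3/4) ^ Suc n * inv_pow 3 (Suc n))"
    by simp
  also have "(3/4) ^ Suc n * inv_pow 3 (Suc n) = inv_pow 4 (Suc n)"
    by (rule power_mult_inv_pow) simp
  finally show ?thesis using inv_pow_bounds(1)[of n] unfolding part2.simps part3.simps by linarith
qed

(* For k > n the coefficient is at most the ratio (3/2)^(k+1) of 1/2^(k+1) to 1/3^(k+1),
   for k = n it exceeds it. *)
lemma B_functional_nonneg:
  assumes "\<And>k. i = B k \<Longrightarrow> n < k"
  shows "0 \<le> part2 i + (3/2) ^ Suc (Suc n) * part3 i"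
proof (cases i)
  case (A k)
  have "(1 :: rat) \<le> (3/2) ^ Suc (Suc n)" by (rule one_le_power) simp
  then have "inv_pow 3 (Suc k) \<le> (3/2) ^ Suc (Suc n) * inv_pow 3 (Suc k)"
    using mult_right_mono[of 1 "(3/2) ^ Suc (Suc n)" "inv_pow 3 (Suc k)"]
    by (simp add: inv_pow_def)
  then show ?thesis using inv_pow_bounds[of k] unfolding A part2.simps part3.simps by linarith
next
  case (B k)
  with assms have "Suc (Suc n) \<le> Suc k" by simp
  then have "(3/2 :: rat) ^ Suc (Suc n) \<le> (3/2) ^ Suc k" by (rule power_increasing) simp
  then have "(3/2) ^ Suc (Suc n) * inv_pow 3 (Suc k) \<le> (3/2) ^ Suc k * inv_pow 3 (Suc k)"
    by (rule mult_right_mono) (simp add: inv_pow_def)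
  moreover have "(3/2) ^ Suc k * inv_pow 3 (Suc k) = inv_pow 2 (Suc k)"
    by (rule power_mult_inv_pow) simp
  ultimately show ?thesis
    using inv_pow_bounds(1)[of k] unfolding B part2.simps part3.simps mult_minus_right by linarith
qed

lemma B_functional_neg: "part2 (B n) + (3/2) ^ Suc (Suc n) * part3 (B n) < 0"
proof -
  have "(3/2) ^ Suc (Suc n) * inv_pow 3 (Suc n) = 3/2 * ((3/2) ^ Suc n * inv_pow 3 (Suc n))"
    by (simp only: power_Suc[of _ "Suc n"] mult.assoc)
  also have "(3/2) ^ Suc n * inv_pow 3 (Suc n) = inv_pow 2 (Suc n)"
    by (rule power_mult_inv_pow) simp
  finally show ?thesis
    using inv_pow_bounds[of n] unfolding part2.simps part3.simps mult_minus_right by linarith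
qed

lemma separating_coefficient:
  assumes sum: "(\<Sum>i\<in>#I. gen_val i) = gen_val j" and "j \<notin># I"
  shows "\<exists>c. (\<forall>i\<in>#I. 0 \<le> part2 i + c * part3 i) \<and> part2 j + c * part3 j < 0"
proof -
  have below: "gen_val i \<le> gen_val j" if "i \<in># I" for i
    using member_le_sum_mset[of I gen_val i] gen_val_pos that sum by (simp add: less_imp_le)
  show ?thesis
  proof (cases j)
    case (A n)
    have later: "n < k" if "A k \<in># I" for k
    proof -
      have "k \<noteq> n" using \<open>j \<notin># I\<close> A that by auto
      moreover have "\<not> k < n"
        using below[OF that] gen_val_A_strict_antimono[of k n] A by auto
      ultimately show ?thesis by simp
    qed
    have "0 \<le> part2 i + (3/4) ^ Suc (Suc n) / 2 * part3 i" if "i \<in># I" for i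
      by (rule A_functional_nonneg) (use later that in blast)
    moreover have "part2 j + (3/4) ^ Suc (Suc n) / 2 * part3 j < 0"
      unfolding A by (rule A_functional_neg)
    ultimately show ?thesis by blast
  next
    case (B n)
    have later: "n < k" if "B k \<in># I" for k
    proof -
      have "k \<noteq> n" using \<open>j \<notin># I\<close> B that by auto
      moreover have "\<not> k < n"
        using below[OF that] gen_val_B_strict_antimono[of k n] B by auto
      ultimately show ?thesis by simp
    qed
    have "0 \<le> part2 i + (3/2) ^ Suc (Suc n) * part3 i" if "i \<in># I" for i
      by (rule B_functional_nonneg) (use later that in blast)
    moreover have "part2 j + (3/2) ^ Suc (Suc n) * part3 j < 0"
      unfolding B by (rule B_functional_neg)
    ultimately show ?thesis by blast
  qed
qed

lemma unique_representation:
  assumes sum: "(\<Sum>i\<in>#I. gen_val i) = gen_val j"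
  shows "I = {#j#}"
proof (cases "j \<in># I")
  case True
  show ?thesis
    by (rule sum_mset_eq_member_imp_singleton[of I gen_val j]) (simp_all add: gen_val_pos True sum)
next
  case False
  then obtain c where nonneg: "\<forall>i\<in>#I. 0 \<le> part2 i + c * part3 i"
    and neg: "part2 j + c * part3 j < 0"
    using separating_coefficient[OF sum] by blast
  have "0 \<le> (\<Sum>i\<in>#I. part2 i + c * part3 i)" using nonneg by (intro sum_mset_nonneg) blast
  also have "\<dots> = part2 j + c * part3 j"
    using sum_parts_eq[OF sum] by (simp add: sum_mset_add_distrib flip: sum_mset_distrib_left)
  finally show ?thesis using neg by simp
qed

lemma half_power_in_generated_monoid: "1 / 2 ^ n \<in> generated_monoid gen_val"
proof -
  have "1 / 2 ^ n = (\<Sum>i\<in>#{#A n, A n, B n, B n#}. gen_val i)"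
    by (simp add: gen_val_def inv_pow_def)
  then show ?thesis unfolding generated_monoid_def by blast
qed

theorem proposition5p1:
  shows "\<exists>M. puiseux_monoid M \<and> atomic_monoid M \<and> M \<subseteq> Z_half_third \<and>
             (\<forall>n::nat. 1 / 2 ^ n \<in> M)"
proof (intro exI conjI allI)
  show "puiseux_monoid (generated_monoid gen_val)"
    using gen_val_pos by (intro puiseux_monoid_generated_monoid less_imp_le)
  show "atomic_monoid (generated_monoid gen_val)"
    by (intro atomic_generated_monoid atom_of_generated_monoid unique_representation)
  have "generated_monoid gen_val \<subseteq> Z_inv 6"
    by (rule generated_monoid_subset) (simp_all add: zero_in_Z_inv Z_inv_add gen_val_in_Z_inv_6)
  then show "generated_monoid gen_val \<subseteq> Z_half_third" using Z_inv_6_subset by blast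
  show "1 / 2 ^ n \<in> generated_monoid gen_val" for n
    by (rule half_power_in_generated_monoid)
qed

end
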